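(* If $\sum_{i=1}^M b_i\ge1$, then for every $\epsilon>0$, $$\bar\Delta_{\mathrm{opt}}(\epsilon)\le\bar\Delta(\mathbf r^\star)\le\sum_{i=1}^M\Big[\frac{w_i\,e^{x^\star\epsilon}\big(1+\frac1{x^\star}\big)}{\min\{b_i,\beta^\star\sqrt{w_i}\}}+w_i\Big],$$ where $\mathbf r^\star$, $x^\star$, $\beta^\star$ are as in the energy-adequate solution.
   Context: Fix an integer $M\ge1$, weights $w_1,\dots,w_M>0$, constants $b_1,\dots,b_M>0$, and $\epsilon>0$. For $\mathbf r\in(0,\infty)^M$ write $S(\mathbf r)=\sum_{i=1}^M r_i$ and define $$\bar\Delta(\mathbf r)=\sum_{l=1}^M \frac{w_l e^{-r_l\epsilon}}{r_l}\, e^{\epsilon S(\mathbf r)}\big(1+S(\mathbf r)\big)+\sum_{l=1}^M w_l,\qquad \sigma_l(\mathbf r)=\frac{(1-e^{-r_l\epsilon})S(\mathbf r)+r_le^{-r_l\epsilon}}{S(\mathbf r)+1}.$$ Problem 1: minimize $\bar\Delta(\mathbf r)$ over $\mathbf r\in(0,\infty)^M$ subject to $\sigma_l(\mathbf r)\le b_l$ for all $l$; its optimal (infimum) value is $\bar\Delta_{\mathrm{opt}}(\epsilon)$. Energy-adequate solution (when $\sum_i b_i\ge1$): let $\beta^\star\in[0,\max_l b_l/\sqrt{w_l}]$ be the root of $\sum_{i=1}^M\min\{b_i,\beta^\star\sqrt{w_i}\}=1$, let $x^\star=-\tfrac12+\sqrt{\tfrac14+\tfrac1\epsilon}$, and set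 $r^\star_l=\min\{b_l,\beta^\star\sqrt{w_l}\}\,x^\star$. *)

theory Defs
  imports Complex_Main
begin

text \<open>Indices run over {1..M}; vectors r in (0,inf)^M are functions nat => real,
  only their values on {1..M} matter.\<close>

definition Ssum :: "nat \<Rightarrow> (nat \<Rightarrow> real) \<Rightarrow> real" where
  "Ssum M r = (\<Sum>i=1..M. r i)"

definition Dbar :: "nat \<Rightarrow> (nat \<Rightarrow> real) \<Rightarrow> real \<Rightarrow> (nat \<Rightarrow> real) \<Rightarrow> real" where
  "Dbar M w eps r =
     (\<Sum>l=1..M. w l * exp (- r l * eps) / r l * exp (eps * Ssum M r) * (1 + Ssum M r))
     + (\<Sum>l=1..M. w l)"

definition sigma :: "nat \<Rightarrow> real \<Rightarrow> (nat \<Rightarrow> real) \<Rightarrow> nat \<Rightarrow> real" where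
  "sigma M eps r l =
     ((1 - exp (- r l * eps)) * Ssum M r + r l * exp (- r l * eps)) / (Ssum M r + 1)"

definition feasible :: "nat \<Rightarrow> (nat \<Rightarrow> real) \<Rightarrow> real \<Rightarrow> (nat \<Rightarrow> real) set" where
  "feasible M b eps = {r. (\<forall>i\<in>{1..M}. r i > 0) \<and> (\<forall>l\<in>{1..M}. sigma M eps r l \<le> b l)}"

definition Dopt :: "nat \<Rightarrow> (nat \<Rightarrow> real) \<Rightarrow> (nat \<Rightarrow> real) \<Rightarrow> real \<Rightarrow> real" where
  "Dopt M w b eps = Inf (Dbar M w eps ` feasible M b eps)"

definition xstar :: "real \<Rightarrow> real" where
  "xstar eps = - 1/2 + sqrt (1/4 + 1/eps)"

definition rstar :: "(nat \<Rightarrow> real) \<Rightarrow> (nat \<Rightarrow> real) \<Rightarrow> real \<Rightarrow> real \<Rightarrow> nat \<Rightarrow> real" where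
  "rstar w b beta eps l = min (b l) (beta * sqrt (w l)) * xstar eps"

end

theory Submission
  imports Defs
begin

text \<open>Write \<open>m\<^sub>i = min b\<^sub>i (\<beta>\<^sup>\<star> \<surd>w\<^sub>i)\<close>, so \<open>r\<^sup>\<star> = m x\<^sup>\<star>\<close> with \<open>\<Sum> m\<^sub>i = 1\<close> and hence
  \<open>S(r\<^sup>\<star>) = x\<^sup>\<star>\<close>. The number \<open>x\<^sup>\<star>\<close> is the positive root of \<open>x (x + 1) = 1/\<epsilon>\<close>, and with
  \<open>1 - e\<^sup>-\<^sup>a \<le> a\<close> this turns each constraint \<open>\<sigma>\<^sub>l(r\<^sup>\<star>) \<le> b\<^sub>l\<close> into \<open>m\<^sub>l x (x + 2) \<le> b\<^sub>l (x + 1)\<^sup>2\<close>,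
  which holds as \<open>m\<^sub>l \<le> b\<^sub>l\<close>. So \<open>r\<^sup>\<star>\<close> is feasible and bounds the infimum; the explicit
  upper bound comes from dropping the factors \<open>e\<^sup>-\<^sup>r\<^sup>\<^sub>l\<^sup>\<epsilon> \<le> 1\<close> in \<open>\<Delta>(r\<^sup>\<star>)\<close>.\<close>

lemma xstar_pos:
  assumes "eps > 0"
  shows "xstar eps > 0"
proof -
  have "sqrt (1/4) < sqrt (1/4 + 1/eps)"
    using assms by (intro real_sqrt_less_mono) simp
  moreover have "sqrt (1/4::real) = 1/2"
    by (simp add: real_sqrt_divide)
  ultimately show ?thesis
    unfolding xstar_def by simp
qed

lemma xstar_mult_succ:
  assumes "eps > 0"
  shows "xstar eps * (xstar eps + 1) = 1 / eps"
proof -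
  have "(sqrt (1/4 + 1/eps))\<^sup>2 = 1/4 + 1/eps"
    using assms by simp
  then show ?thesis
    unfolding xstar_def by (simp add: power2_eq_square algebra_simps)
qed

lemma Ssum_scaled_shares:
  assumes "(\<Sum>i=1..M. m i) = 1"
  shows "Ssum M (\<lambda>i. m i * x) = x"
  unfolding Ssum_def using assms by (simp add: sum_distrib_right[symmetric])

lemma sigma_numerator_bound:
  fixes x eps m b :: real
  assumes "x > 0" "x * (x + 1) * eps = 1" "0 < m" "m \<le> b"
  shows "(1 - exp (- (m * x * eps))) * x + m * x * exp (- (m * x * eps)) \<le> b * (x + 1)"
proof -
  define a where "a = m * x * eps"
  have "(1 - exp (- a)) * x \<le> a * x"
    using exp_ge_add_one_self[of "-a"] assms(1) by (simp add: mult_right_mono)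
  also have "a * x = m * x / (x + 1)"
  proof -
    have "a * x * (x + 1) = m * x * (x * (x + 1) * eps)"
      unfolding a_def by (simp add: algebra_simps)
    then show ?thesis
      using assms(1,2) by (simp add: eq_divide_eq)
  qed
  finally have first: "(1 - exp (- a)) * x \<le> m * x / (x + 1)" .
  have "x * (x + 1) > 0"
    using assms(1) by simp
  then have "eps > 0"
    using assms(2) by (metis zero_less_mult_iff zero_less_one not_less_iff_gr_or_eq)
  then have "a \<ge> 0"
    using assms(1,3) unfolding a_def by simp
  then have second: "m * x * exp (- a) \<le> m * x"
    using assms(1,3) by simp
  have "m * x / (x + 1) + m * x = m * (x * (x + 2)) / (x + 1)"
    using assms(1) by (simp add: field_simps)
  also have "\<dots> \<le> b * (x + 1)\<^sup>2 / (x + 1)"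
    using assms(1,3,4)
    by (intro divide_right_mono mult_mono) (auto simp: power2_eq_square algebra_simps)
  also have "\<dots> = b * (x + 1)"
    using assms(1) by (simp add: power2_eq_square)
  finally show ?thesis
    using first second unfolding a_def by linarith
qed

lemma scaled_shares_feasible:
  assumes "eps > 0"
    and shares: "\<forall>i\<in>{1..M}. 0 < m i \<and> m i \<le> b i" "(\<Sum>i=1..M. m i) = 1"
  shows "(\<lambda>i. m i * xstar eps) \<in> feasible M b eps"
  unfolding feasible_def
proof (intro CollectI conjI ballI)
  let ?x = "xstar eps"
  have x: "?x > 0" "?x * (?x + 1) * eps = 1"
    using xstar_pos[OF assms(1)] xstar_mult_succ[OF assms(1)] assms(1) by auto
  fix l assume l: "l \<in> {1..M}"
  then show "m l * ?x > 0"
    using shares(1) x(1) by simp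
  have "(1 - exp (- (m l * ?x * eps))) * ?x + m l * ?x * exp (- (m l * ?x * eps))
        \<le> b l * (?x + 1)"
    using sigma_numerator_bound[OF x] shares(1) l by simp
  then show "sigma M eps (\<lambda>i. m i * ?x) l \<le> b l"
    unfolding sigma_def Ssum_scaled_shares[OF shares(2)]
    using x(1) by (simp add: divide_le_eq mult.commute)
qed

lemma Dbar_nonneg:
  assumes "\<forall>i\<in>{1..M}. w i > 0" "\<forall>i\<in>{1..M}. r i > 0"
  shows "Dbar M w eps r \<ge> 0"
proof -
  have "Ssum M r \<ge> 0"
    unfolding Ssum_def using assms(2) by (intro sum_nonneg) (auto simp: less_imp_le)
  then show ?thesis
    unfolding Dbar_def using assms
    by (intro add_nonneg_nonneg sum_nonneg)
       (auto intro!: mult_nonneg_nonneg divide_nonneg_nonneg simp: less_imp_le)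
qed

lemma Dopt_le_Dbar:
  assumes "\<forall>i\<in>{1..M}. w i > 0" "r \<in> feasible M b eps"
  shows "Dopt M w b eps \<le> Dbar M w eps r"
proof -
  have "bdd_below (Dbar M w eps ` feasible M b eps)"
    using Dbar_nonneg[OF assms(1)] by (intro bdd_belowI[where m=0]) (auto simp: feasible_def)
  then show ?thesis
    unfolding Dopt_def using assms(2) by (intro cInf_lower) auto
qed

lemma Dbar_scaled_shares_le:
  assumes "eps > 0" "\<forall>i\<in>{1..M}. w i > 0"
    and shares: "\<forall>i\<in>{1..M}. m i > 0" "(\<Sum>i=1..M. m i) = 1"
  shows "Dbar M w eps (\<lambda>i. m i * xstar eps)
         \<le> (\<Sum>i=1..M. w i * exp (xstar eps * eps) * (1 + 1 / xstar eps) / m i + w i)"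
proof -
  let ?x = "xstar eps"
  have x: "?x > 0"
    using xstar_pos[OF assms(1)] .
  have "Dbar M w eps (\<lambda>i. m i * ?x)
        = (\<Sum>i=1..M. exp (- (m i * ?x) * eps) * (w i * exp (?x * eps) * (1 + 1 / ?x) / m i) + w i)"
    unfolding Dbar_def Ssum_scaled_shares[OF shares(2)] sum.distrib[symmetric]
    using shares(1) x by (intro sum.cong) (auto simp: field_simps)
  also have "\<dots> \<le> (\<Sum>i=1..M. w i * exp (?x * eps) * (1 + 1 / ?x) / m i + w i)"
    using assms(1,2) shares(1) x
    by (intro sum_mono add_right_mono mult_left_le_one_le)
       (auto intro!: mult_nonneg_nonneg divide_nonneg_nonneg simp: less_imp_le)
  finally show ?thesis .
qed

theorem lemma2:
  fixes M :: nat and w b :: "nat \<Rightarrow> real" and eps beta :: real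
  assumes "M \<ge> 1"
    and "\<forall>i\<in>{1..M}. w i > 0"
    and "\<forall>i\<in>{1..M}. b i > 0"
    and "(\<Sum>i=1..M. b i) \<ge> 1"
    and "eps > 0"
    and "0 \<le> beta" and "beta \<le> Max ((\<lambda>l. b l / sqrt (w l)) ` {1..M})"
    and "(\<Sum>i=1..M. min (b i) (beta * sqrt (w i))) = 1"
  shows "Dopt M w b eps \<le> Dbar M w eps (rstar w b beta eps)
       \<and> Dbar M w eps (rstar w b beta eps)
           \<le> (\<Sum>i=1..M. w i * exp (xstar eps * eps) * (1 + 1 / xstar eps)
                          / min (b i) (beta * sqrt (w i)) + w i)"
proof -
  \<comment> \<open>\<open>M \<ge> 1\<close>, \<open>\<Sum> b\<^sub>i \<ge> 1\<close> and the bound on \<open>\<beta>\<close> only guarantee that such a \<open>\<beta>\<close> exists; they are unused.\<close>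
  define m where "m i = min (b i) (beta * sqrt (w i))" for i
  have "beta \<noteq> 0"
    using assms(3,8) by (auto simp: m_def)
  then have shares: "\<forall>i\<in>{1..M}. 0 < m i \<and> m i \<le> b i" "(\<Sum>i=1..M. m i) = 1"
    using assms(2,3,6,8) by (auto simp: m_def)
  have rstar: "rstar w b beta eps = (\<lambda>i. m i * xstar eps)"
    unfolding rstar_def m_def ..
  show ?thesis
    unfolding rstar m_def[symmetric]
    using Dopt_le_Dbar[OF assms(2) scaled_shares_feasible[OF assms(5) shares]]
          Dbar_scaled_shares_le[OF assms(5,2) _ shares(2)] shares(1)
    by auto
qed

end
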